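(* Let $\Omega\subseteq\mathbb{R}^n$ be open and connected and let $u\in C^2(\Omega;\mathbb{R}^n)$. For $a\ge0$ set $\mathcal{L}_a:=\{A\in\mathbb{R}^{n\times n}: |A|=\sqrt a,\ \det A\neq0\}$. Consider: (a) there exists $a\ge0$ such that $Du(x)\in\mathcal{L}_a$ for all $x\in\Omega$; (b) $\Delta_\infty u=0$ on $\Omega$. Then (a) implies (b). Conversely, if $u$ is in addition a local diffeomorphism on $\Omega$, then (b) implies (a).
   Context: $|A|^2=\sum_{\alpha,i}A_{\alpha i}^2$. For $u\in C^2(\Omega;\mathbb{R}^n)$, $(\Delta_\infty u)_\alpha:=\sum_{i,j,\beta} D_iu_\alpha\, D_ju_\beta\, D^2_{ij}u_\beta+|Du|^2\sum_{\beta,i}[Du]^\perp_{\alpha\beta}\,D^2_{ii}u_\beta$, where $[Du(x)]^\perp$ is the orthogonal projection of $\mathbb{R}^n$ onto the null space of $Du(x)^\top$. *)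

theory Defs
  imports "HOL-Analysis.Analysis"
begin

text \<open>Jacobian matrix: (jac u x) $ alpha $ i = D_i u_alpha (x).\<close>
definition jac :: "(real^'n \<Rightarrow> real^'m) \<Rightarrow> real^'n \<Rightarrow> real^'n^'m" where
  "jac u x = matrix (frechet_derivative u (at x))"

text \<open>Second partial derivatives: hess2 u beta i j x = D_j (D_i u_beta) (x).\<close>
definition hess2 :: "(real^'n \<Rightarrow> real^'m) \<Rightarrow> 'm \<Rightarrow> 'n \<Rightarrow> 'n \<Rightarrow> real^'n \<Rightarrow> real" where
  "hess2 u \<beta> i j x = jac (\<lambda>y. \<chi> k. jac u y $ \<beta> $ k) x $ i $ j"

definition C2_on :: "(real^'n) set \<Rightarrow> (real^'n \<Rightarrow> real^'m) \<Rightarrow> bool" where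
  "C2_on \<Omega> u \<longleftrightarrow>
     (\<forall>x\<in>\<Omega>. u differentiable (at x)) \<and>
     (\<forall>x\<in>\<Omega>. \<forall>\<beta> i. (\<lambda>y. jac u y $ \<beta> $ i) differentiable (at x)) \<and>
     (\<forall>\<beta> i j. continuous_on \<Omega> (hess2 u \<beta> i j))"

definition fro_sq :: "real^'n^'m \<Rightarrow> real" where
  "fro_sq A = (\<Sum>\<alpha>\<in>UNIV. \<Sum>i\<in>UNIV. (A $ \<alpha> $ i)^2)"

definition orth_proj :: "(real^'n) set \<Rightarrow> real^'n \<Rightarrow> real^'n" where
  "orth_proj S v = (THE p. p \<in> S \<and> (\<forall>w\<in>S. (v - p) \<bullet> w = 0))"

text \<open>[A]^perp: matrix of the orthogonal projection onto the null space of A^T.\<close>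
definition perp_mat :: "real^'n^'m \<Rightarrow> real^'m^'m" where
  "perp_mat A = (\<chi> \<alpha> \<beta>. orth_proj {v. transpose A *v v = 0} (axis \<beta> 1) $ \<alpha>)"

definition inf_lap :: "(real^'n \<Rightarrow> real^'m) \<Rightarrow> real^'n \<Rightarrow> real^'m" where
  "inf_lap u x = (\<chi> \<alpha>.
     (\<Sum>i\<in>UNIV. \<Sum>j\<in>UNIV. \<Sum>\<beta>\<in>UNIV. jac u x $ \<alpha> $ i * jac u x $ \<beta> $ j * hess2 u \<beta> i j x)
     + fro_sq (jac u x) * (\<Sum>\<beta>\<in>UNIV. \<Sum>i\<in>UNIV. perp_mat (jac u x) $ \<alpha> $ \<beta> * hess2 u \<beta> i i x))"

definition Lset :: "real \<Rightarrow> (real^'n^'n) set" where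
  "Lset a = {A. sqrt (fro_sq A) = sqrt a \<and> det A \<noteq> 0}"

definition local_diffeo_on :: "(real^'n) set \<Rightarrow> (real^'n \<Rightarrow> real^'n) \<Rightarrow> bool" where
  "local_diffeo_on \<Omega> u \<longleftrightarrow>
     (\<forall>x\<in>\<Omega>. \<exists>V. open V \<and> x \<in> V \<and> V \<subseteq> \<Omega> \<and> open (u ` V) \<and> inj_on u V \<and>
        (\<forall>z\<in>V. u differentiable (at z)) \<and>
        (\<exists>g. (\<forall>z\<in>V. g (u z) = z) \<and> (\<forall>y\<in>u ` V. g differentiable (at y))))"

end

theory Submission
  imports Defs
begin

text \<open>
  Symmetry of second derivatives (which needs only differentiability of the first partials at
  the point: both mixed derivatives are limits of one symmetric second difference quotient)
  turns the first term of \<open>\<Delta>\<^sub>\<infinity>u\<close> into \<open>(1/2) Du \<nabla>|Du|\<^sup>2\<close>. Where \<open>Du\<close> is invertible the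
  projection \<open>[Du]\<^sup>\<bottom>\<close> vanishes, so there \<open>\<Delta>\<^sub>\<infinity>u = 0\<close> exactly when \<open>|Du|\<^sup>2\<close> is critical.
  Under (a) the function \<open>|Du|\<^sup>2\<close> is constant. A local diffeomorphism has invertible
  differential (chain rule with the local inverse), so under (b) \<open>|Du|\<^sup>2\<close> has vanishing
  derivative on the connected open set \<open>\<Omega>\<close> and is constant.
\<close>

lemma has_real_derivative_along_line:
  fixes f :: "'a::real_normed_vector \<Rightarrow> real"
  assumes "(f has_derivative f') (at (p + s *\<^sub>R a))"
  shows "((\<lambda>s. f (p + s *\<^sub>R a)) has_real_derivative f' a) (at s)"
proof -
  have "((\<lambda>s. p + s *\<^sub>R a) has_derivative (\<lambda>t. t *\<^sub>R a)) (at s)"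
    by (auto intro!: derivative_eq_intros)
  from has_derivative_compose[OF this assms]
  have "((\<lambda>s. f (p + s *\<^sub>R a)) has_derivative (\<lambda>t. f' (t *\<^sub>R a))) (at s)" .
  moreover have "(\<lambda>t. f' (t *\<^sub>R a)) = (*) (f' a)"
    using linear_cmul[OF has_derivative_linear[OF assms]] by (auto simp: fun_eq_iff)
  ultimately show ?thesis
    unfolding has_field_derivative_def by simp
qed

lemma second_difference_mean_value:
  fixes f :: "'a::real_normed_vector \<Rightarrow> real"
  assumes h: "0 < h"
    and Df: "\<And>y. y \<in> S \<Longrightarrow> (f has_derivative Df y) (at y)"
    and square: "\<And>s t. 0 \<le> s \<Longrightarrow> s \<le> h \<Longrightarrow> 0 \<le> t \<Longrightarrow> t \<le> h \<Longrightarrow> x + s *\<^sub>R a + t *\<^sub>R b \<in> S"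
  shows "\<exists>z. 0 < z \<and> z < h \<and>
    f (x + h *\<^sub>R a + h *\<^sub>R b) - f (x + h *\<^sub>R a) - f (x + h *\<^sub>R b) + f x
      = h * (Df (x + z *\<^sub>R a + h *\<^sub>R b) a - Df (x + z *\<^sub>R a) a)"
proof -
  define g where "g s = f (x + s *\<^sub>R a + h *\<^sub>R b) - f (x + s *\<^sub>R a)" for s
  define g' where "g' s = Df (x + s *\<^sub>R a + h *\<^sub>R b) a - Df (x + s *\<^sub>R a) a" for s
  have "(g has_real_derivative g' s) (at s)" if "0 \<le> s" "s \<le> h" for s
  proof -
    have "x + s *\<^sub>R a + h *\<^sub>R b \<in> S" "x + s *\<^sub>R a \<in> S"
      using square[OF that, of h] square[OF that, of 0] h by auto
    then have "((\<lambda>s. f ((x + h *\<^sub>R b) + s *\<^sub>R a)) has_real_derivative Df (x + s *\<^sub>R a + h *\<^sub>R b) a) (at s)"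
        "((\<lambda>s. f (x + s *\<^sub>R a)) has_real_derivative Df (x + s *\<^sub>R a) a) (at s)"
      using has_real_derivative_along_line[OF Df, of "x + h *\<^sub>R b" s a]
        has_real_derivative_along_line[OF Df, of x s a]
      by (simp_all add: algebra_simps)
    from DERIV_diff[OF this] show ?thesis
      unfolding g_def g'_def by (simp add: algebra_simps)
  qed
  then obtain z where "0 < z" "z < h" "g h - g 0 = (h - 0) * g' z"
    using MVT2[of 0 h g g'] h by blast
  then show ?thesis
    unfolding g_def g'_def by auto
qed

lemma second_difference_bound:
  fixes f :: "'a::real_normed_vector \<Rightarrow> real"
  assumes h: "0 < h"
    and Df: "\<And>y. y \<in> S \<Longrightarrow> (f has_derivative Df y) (at y)"
    and square: "\<And>s t. 0 \<le> s \<Longrightarrow> s \<le> h \<Longrightarrow> 0 \<le> t \<Longrightarrow> t \<le> h \<Longrightarrow> x + s *\<^sub>R a + t *\<^sub>R b \<in> S"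
    and "linear Qa"
    and approx: "\<And>s t. 0 \<le> s \<Longrightarrow> s \<le> h \<Longrightarrow> 0 \<le> t \<Longrightarrow> t \<le> h \<Longrightarrow>
           \<bar>Df (x + s *\<^sub>R a + t *\<^sub>R b) a - Df x a - Qa (s *\<^sub>R a + t *\<^sub>R b)\<bar> \<le> c"
  shows "\<bar>(f (x + h *\<^sub>R a + h *\<^sub>R b) - f (x + h *\<^sub>R a) - f (x + h *\<^sub>R b) + f x) - h\<^sup>2 * Qa b\<bar>
           \<le> 2 * h * c"
proof -
  obtain z where z: "0 < z" "z < h" and diff:
    "f (x + h *\<^sub>R a + h *\<^sub>R b) - f (x + h *\<^sub>R a) - f (x + h *\<^sub>R b) + f x
      = h * (Df (x + z *\<^sub>R a + h *\<^sub>R b) a - Df (x + z *\<^sub>R a) a)"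
    using second_difference_mean_value[OF h Df square] by blast
  have "Qa (z *\<^sub>R a + h *\<^sub>R b) - Qa (z *\<^sub>R a + 0 *\<^sub>R b) = h * Qa b"
    using \<open>linear Qa\<close> by (simp add: linear_add linear_cmul)
  then have "\<bar>Df (x + z *\<^sub>R a + h *\<^sub>R b) a - Df (x + z *\<^sub>R a) a - h * Qa b\<bar> \<le> 2 * c"
    using approx[of z h] approx[of z 0] z h by simp
  moreover have "(f (x + h *\<^sub>R a + h *\<^sub>R b) - f (x + h *\<^sub>R a) - f (x + h *\<^sub>R b) + f x) - h\<^sup>2 * Qa b
      = h * (Df (x + z *\<^sub>R a + h *\<^sub>R b) a - Df (x + z *\<^sub>R a) a - h * Qa b)"
    unfolding diff by (simp add: power2_eq_square algebra_simps)
  ultimately show ?thesis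
    using h by (simp add: abs_mult mult_left_mono mult.assoc)
qed

lemma second_difference_quotient_tendsto:
  fixes f :: "'a::real_normed_vector \<Rightarrow> real"
  assumes "open S" "x \<in> S"
    and Df: "\<And>y. y \<in> S \<Longrightarrow> (f has_derivative Df y) (at y)"
    and DDf: "((\<lambda>y. Df y a) has_derivative Qa) (at x)"
  shows "((\<lambda>h. (f (x + h *\<^sub>R a + h *\<^sub>R b) - f (x + h *\<^sub>R a) - f (x + h *\<^sub>R b) + f x) / h\<^sup>2)
           \<longlongrightarrow> Qa b) (at_right 0)"
proof (rule tendstoI)
  fix e :: real assume e: "e > 0"
  define K where "K = norm a + norm b + 1"
  have K: "K > 0" unfolding K_def by (simp add: add_nonneg_pos)
  obtain r where r: "r > 0" "ball x r \<subseteq> S"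
    using assms(1,2) open_contains_ball by blast
  obtain d where d: "d > 0" and near: "\<And>y. norm (y - x) < d \<Longrightarrow>
      norm (Df y a - Df x a - Qa (y - x)) \<le> e / (4 * K) * norm (y - x)"
    using DDf e K unfolding has_derivative_at_alt by (metis divide_pos_pos zero_less_mult_iff zero_less_numeral)
  have "\<forall>\<^sub>F h in at_right 0. 0 < h \<and> h * K < min d r"
    unfolding eventually_at_right_field
    by (rule exI[of _ "min d r / K"]) (use K d r in \<open>auto simp: field_simps\<close>)
  then show "\<forall>\<^sub>F h in at_right 0. dist ((f (x + h *\<^sub>R a + h *\<^sub>R b) - f (x + h *\<^sub>R a)
      - f (x + h *\<^sub>R b) + f x) / h\<^sup>2) (Qa b) < e"
  proof eventually_elim
    case (elim h)
    then have h: "0 < h" "h * K < d" "h * K < r" by auto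
    have short: "norm (s *\<^sub>R a + t *\<^sub>R b) \<le> h * K"
      if "0 \<le> s" "s \<le> h" "0 \<le> t" "t \<le> h" for s t
    proof -
      have "norm (s *\<^sub>R a + t *\<^sub>R b) \<le> s * norm a + t * norm b"
        using norm_triangle_ineq[of "s *\<^sub>R a" "t *\<^sub>R b"] that by simp
      also have "\<dots> \<le> h * norm a + h * norm b"
        using that by (intro add_mono mult_right_mono) auto
      also have "\<dots> \<le> h * K"
        using h by (simp add: K_def field_simps)
      finally show ?thesis .
    qed
    have "x + s *\<^sub>R a + t *\<^sub>R b \<in> S" if "0 \<le> s" "s \<le> h" "0 \<le> t" "t \<le> h" for s t
    proof -
      have "dist (x + s *\<^sub>R a + t *\<^sub>R b) x < r"
        using short[OF that] h by (simp add: dist_norm add.assoc)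
      then show ?thesis using r(2) by (auto simp: dist_commute)
    qed
    moreover have "\<bar>Df (x + s *\<^sub>R a + t *\<^sub>R b) a - Df x a - Qa (s *\<^sub>R a + t *\<^sub>R b)\<bar> \<le> e * h / 4"
      if "0 \<le> s" "s \<le> h" "0 \<le> t" "t \<le> h" for s t
    proof -
      have "norm (Df (x + s *\<^sub>R a + t *\<^sub>R b) a - Df x a - Qa (s *\<^sub>R a + t *\<^sub>R b))
          \<le> e / (4 * K) * norm (s *\<^sub>R a + t *\<^sub>R b)"
        using near[of "x + s *\<^sub>R a + t *\<^sub>R b"] short[OF that] h by (simp add: add.assoc)
      also have "\<dots> \<le> e / (4 * K) * (h * K)"
        using short[OF that] e K by (intro mult_left_mono) auto
      also have "\<dots> = e * h / 4"
        using K by simp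
      finally show ?thesis by simp
    qed
    ultimately have "\<bar>(f (x + h *\<^sub>R a + h *\<^sub>R b) - f (x + h *\<^sub>R a) - f (x + h *\<^sub>R b) + f x)
        - h\<^sup>2 * Qa b\<bar> \<le> 2 * h * (e * h / 4)"
      by (intro second_difference_bound[OF h(1) Df _ has_derivative_linear[OF DDf]])
    moreover have "0 < e * h\<^sup>2"
      using h e by simp
    ultimately show ?case
      using h by (simp add: dist_real_def power2_eq_square field_simps abs_div)
  qed
qed

lemma second_derivative_symmetric:
  fixes f :: "'a::real_normed_vector \<Rightarrow> real"
  assumes "open S" "x \<in> S"
    and Df: "\<And>y. y \<in> S \<Longrightarrow> (f has_derivative Df y) (at y)"
    and "((\<lambda>y. Df y a) has_derivative Qa) (at x)"
    and "((\<lambda>y. Df y b) has_derivative Qb) (at x)"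
  shows "Qa b = Qb a"
proof -
  let ?quot = "\<lambda>h. (f (x + h *\<^sub>R a + h *\<^sub>R b) - f (x + h *\<^sub>R a) - f (x + h *\<^sub>R b) + f x) / h\<^sup>2"
  have "(?quot \<longlongrightarrow> Qa b) (at_right 0)"
    by (rule second_difference_quotient_tendsto[OF assms(1,2) Df assms(4)])
  moreover have "(?quot \<longlongrightarrow> Qb a) (at_right 0)"
    using second_difference_quotient_tendsto[OF assms(1,2) Df assms(5), of a]
    by (simp add: algebra_simps)
  ultimately show ?thesis
    by (rule tendsto_unique[rotated 1]) simp
qed

lemma det_nz_iff_ker_trivial:
  fixes A :: "real^'n^'n"
  shows "det A \<noteq> 0 \<longleftrightarrow> (\<forall>h. A *v h = 0 \<longrightarrow> h = 0)"
  by (metis invertible_det_nz invertible_left_inverse matrix_left_invertible_ker)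

lemma orth_proj_zero_subspace: "orth_proj {0} v = 0"
  unfolding orth_proj_def by (rule the_equality) auto

lemma perp_mat_eq_0:
  fixes A :: "real^'n^'n"
  assumes "det A \<noteq> 0"
  shows "perp_mat A = 0"
proof -
  have "{v. transpose A *v v = 0} = {0}"
    using assms det_nz_iff_ker_trivial[of "transpose A"] by auto
  then show ?thesis
    unfolding perp_mat_def by (simp add: orth_proj_zero_subspace vec_eq_iff)
qed

lemma has_derivative_vec_lambda:
  fixes p :: "'k::finite \<Rightarrow> 'a::real_normed_vector \<Rightarrow> real"
  assumes "\<And>k. (p k has_derivative p' k) (at x)"
  shows "((\<lambda>y. \<chi> k. p k y) has_derivative (\<lambda>h. \<chi> k. p' k h)) (at x)"
  using assms by (subst has_derivative_componentwise_within) (auto simp: Basis_vec_def inner_axis)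

lemma jac_nth: "jac u y $ \<beta> $ k = frechet_derivative u (at y) (axis k 1) $ \<beta>"
  by (simp add: jac_def matrix_def)

lemma hess2_eq:
  assumes "\<And>k. ((\<lambda>y. jac u y $ \<beta> $ k) has_derivative Q k) (at x)"
  shows "hess2 u \<beta> i j x = Q i (axis j 1)"
proof -
  have "frechet_derivative (\<lambda>y. \<chi> k. jac u y $ \<beta> $ k) (at x) = (\<lambda>h. \<chi> k. Q k h)"
    using has_derivative_vec_lambda[of "\<lambda>k y. jac u y $ \<beta> $ k", OF assms]
    by (rule frechet_derivative_at[symmetric])
  then show ?thesis
    unfolding hess2_def jac_def[of "\<lambda>y. \<chi> k. jac u y $ \<beta> $ k"] by (simp add: matrix_def)
qed

lemma C2_on_has_derivative_jac_nth:
  assumes "C2_on \<Omega> u" "x \<in> \<Omega>"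
  shows "((\<lambda>y. jac u y $ \<beta> $ i) has_derivative
           frechet_derivative (\<lambda>y. jac u y $ \<beta> $ i) (at x)) (at x)"
  using assms unfolding C2_on_def by (simp add: frechet_derivative_works)

lemma C2_on_hess2_symmetric:
  assumes "open \<Omega>" "C2_on \<Omega> u" "x \<in> \<Omega>"
  shows "hess2 u \<beta> i j x = hess2 u \<beta> j i x"
proof -
  let ?Q = "\<lambda>k. frechet_derivative (\<lambda>y. jac u y $ \<beta> $ k) (at x)"
  have Du: "((\<lambda>y. u y $ \<beta>) has_derivative (\<lambda>h. frechet_derivative u (at y) h $ \<beta>)) (at y)"
    if "y \<in> \<Omega>" for y
    using assms(2) that unfolding C2_on_def
    by (auto intro: bounded_linear.has_derivative[OF bounded_linear_vec_nth]
        simp: frechet_derivative_works)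
  have "?Q i (axis j 1) = ?Q j (axis i 1)"
    using second_derivative_symmetric[OF assms(1,3) Du]
      C2_on_has_derivative_jac_nth[OF assms(2,3)] by (simp add: jac_nth)
  then show ?thesis
    using hess2_eq[OF C2_on_has_derivative_jac_nth[OF assms(2,3)]] by simp
qed

lemma has_derivative_fro_sq_jac:
  assumes "\<And>\<alpha> i. ((\<lambda>y. jac u y $ \<alpha> $ i) has_derivative Q \<alpha> i) (at x)"
  shows "((\<lambda>y. fro_sq (jac u y)) has_derivative
     (\<lambda>h. \<Sum>\<alpha>\<in>UNIV. \<Sum>i\<in>UNIV. 2 * jac u x $ \<alpha> $ i * Q \<alpha> i h)) (at x)"
  unfolding fro_sq_def
  by (auto intro!: derivative_eq_intros assms simp: power2_eq_square mult_ac)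

lemma inf_lap_eq_jac_grad_fro_sq:
  fixes u :: "real^'n \<Rightarrow> real^'n"
  assumes "open \<Omega>" "C2_on \<Omega> u" "x \<in> \<Omega>" "det (jac u x) \<noteq> 0"
    and F: "((\<lambda>y. fro_sq (jac u y)) has_derivative F') (at x)"
  shows "2 *\<^sub>R inf_lap u x = jac u x *v (\<chi> k. F' (axis k 1))"
proof -
  let ?J = "jac u x" and ?H = "\<lambda>\<beta> i j. hess2 u \<beta> i j x"
  note partials = C2_on_has_derivative_jac_nth[OF assms(2,3)]
  have F': "F' = (\<lambda>h. \<Sum>\<alpha>\<in>UNIV. \<Sum>i\<in>UNIV.
              2 * ?J $ \<alpha> $ i * frechet_derivative (\<lambda>y. jac u y $ \<alpha> $ i) (at x) h)"
    using has_derivative_unique[OF F has_derivative_fro_sq_jac[OF partials]] .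
  have grad: "F' (axis k 1) = 2 * (\<Sum>j\<in>UNIV. \<Sum>\<beta>\<in>UNIV. ?J $ \<beta> $ j * ?H \<beta> k j)" for k
  proof -
    have "F' (axis k 1) = (\<Sum>\<beta>\<in>UNIV. \<Sum>j\<in>UNIV. 2 * (?J $ \<beta> $ j * ?H \<beta> k j))"
      unfolding F' using hess2_eq[OF partials] C2_on_hess2_symmetric[OF assms(1-3)]
      by (simp add: mult.assoc)
    also have "\<dots> = 2 * (\<Sum>\<beta>\<in>UNIV. \<Sum>j\<in>UNIV. ?J $ \<beta> $ j * ?H \<beta> k j)"
      by (simp only: sum_distrib_left)
    also have "(\<Sum>\<beta>\<in>UNIV. \<Sum>j\<in>UNIV. ?J $ \<beta> $ j * ?H \<beta> k j)
             = (\<Sum>j\<in>UNIV. \<Sum>\<beta>\<in>UNIV. ?J $ \<beta> $ j * ?H \<beta> k j)"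
      by (rule sum.swap)
    finally show ?thesis .
  qed
  show ?thesis
    unfolding inf_lap_def grad perp_mat_eq_0[OF assms(4)]
    by (simp add: vec_eq_iff matrix_vector_mult_def sum_distrib_left mult.assoc mult.left_commute)
qed

lemma inf_lap_eq_0_iff_fro_sq_jac_critical:
  fixes u :: "real^'n \<Rightarrow> real^'n"
  assumes "open \<Omega>" "C2_on \<Omega> u" "x \<in> \<Omega>" "det (jac u x) \<noteq> 0"
  shows "inf_lap u x = 0 \<longleftrightarrow> ((\<lambda>y. fro_sq (jac u y)) has_derivative (\<lambda>h. 0)) (at x)"
proof -
  obtain F' where F: "((\<lambda>y. fro_sq (jac u y)) has_derivative F') (at x)"
    using has_derivative_fro_sq_jac[OF C2_on_has_derivative_jac_nth[OF assms(2,3)]] by blast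
  have "inf_lap u x = 0 \<longleftrightarrow> (\<chi> k. F' (axis k 1)) = 0"
    using inf_lap_eq_jac_grad_fro_sq[OF assms F] det_nz_iff_ker_trivial[of "jac u x"] assms(4)
    by (metis matrix_vector_mult_0_right scaleR_eq_0_iff zero_neq_numeral)
  also have "\<dots> \<longleftrightarrow> F' = (\<lambda>h. 0)"
  proof
    assume "(\<chi> k. F' (axis k 1)) = 0"
    then have "F' (axis k 1) = 0" for k
      by (simp add: vec_eq_iff)
    then show "F' = (\<lambda>h. 0)"
      by (intro linear_eq_stdbasis has_derivative_linear[OF F])
        (auto simp: linear_zero Basis_vec_def)
  qed (simp add: vec_eq_iff)
  also have "\<dots> \<longleftrightarrow> ((\<lambda>y. fro_sq (jac u y)) has_derivative (\<lambda>h. 0)) (at x)"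
    using F has_derivative_unique by blast
  finally show ?thesis .
qed

lemma local_diffeo_on_det_jac_nonzero:
  assumes "local_diffeo_on \<Omega> u" "x \<in> \<Omega>"
  shows "det (jac u x) \<noteq> 0"
proof -
  obtain V g where V: "open V" "x \<in> V"
    and u: "u differentiable (at x)"
    and g: "\<forall>z\<in>V. g (u z) = z" "g differentiable (at (u x))"
    using assms unfolding local_diffeo_on_def by (metis image_eqI)
  define Du where "Du = frechet_derivative u (at x)"
  define Dg where "Dg = frechet_derivative g (at (u x))"
  have Du: "(u has_derivative Du) (at x)" and Dg: "(g has_derivative Dg) (at (u x))"
    using u g(2) by (simp_all add: Du_def Dg_def frechet_derivative_works)
  have "((\<lambda>z. z) has_derivative (\<lambda>h. Dg (Du h))) (at x)"
    by (rule has_derivative_transform_within_open[OF has_derivative_compose[OF Du Dg] V])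
      (use g in auto)
  then have "(\<lambda>h. Dg (Du h)) = (\<lambda>h. h)"
    using has_derivative_unique has_derivative_ident by blast
  then have "inj Du"
    by (metis injI)
  then show ?thesis
    unfolding jac_def Du_def[symmetric] using det_nz_iff_inj has_derivative_linear[OF Du] by blast
qed

theorem lemma2p1:
  fixes u :: "real^'n \<Rightarrow> real^'n" and \<Omega> :: "(real^'n) set"
  assumes "open \<Omega>" and "connected \<Omega>" and "C2_on \<Omega> u"
  shows "((\<exists>a\<ge>0. \<forall>x\<in>\<Omega>. jac u x \<in> Lset a) \<longrightarrow> (\<forall>x\<in>\<Omega>. inf_lap u x = 0))
       \<and> (local_diffeo_on \<Omega> u \<longrightarrow> (\<forall>x\<in>\<Omega>. inf_lap u x = 0) \<longrightarrow>
            (\<exists>a\<ge>0. \<forall>x\<in>\<Omega>. jac u x \<in> Lset a))"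
proof -
  let ?F = "\<lambda>y. fro_sq (jac u y)"
  note critical = inf_lap_eq_0_iff_fro_sq_jac_critical[OF assms(1,3)]
  show ?thesis
  proof (intro conjI impI)
    assume "\<exists>a\<ge>0. \<forall>x\<in>\<Omega>. jac u x \<in> Lset a"
    then obtain a where F: "\<And>x. x \<in> \<Omega> \<Longrightarrow> ?F x = a"
      and det: "\<And>x. x \<in> \<Omega> \<Longrightarrow> det (jac u x) \<noteq> 0"
      unfolding Lset_def by auto
    have "(?F has_derivative (\<lambda>h. 0)) (at x)" if "x \<in> \<Omega>" for x
      by (rule has_derivative_transform_within_open[OF has_derivative_const assms(1) that])
        (simp add: F)
    then show "\<forall>x\<in>\<Omega>. inf_lap u x = 0"
      using critical det by blast
  next
    assume diffeo: "local_diffeo_on \<Omega> u" and lap: "\<forall>x\<in>\<Omega>. inf_lap u x = 0"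
    have det: "det (jac u x) \<noteq> 0" if "x \<in> \<Omega>" for x
      using local_diffeo_on_det_jac_nonzero[OF diffeo that] .
    have "(?F has_derivative (\<lambda>h. 0)) (at x)" if "x \<in> \<Omega>" for x
      using critical[OF that det[OF that]] lap that by simp
    then have const: "?F x = ?F y" if "x \<in> \<Omega>" "y \<in> \<Omega>" for x y
      using has_derivative_zero_unique_connected[OF assms(1,2) _ that] by blast
    show "\<exists>a\<ge>0. \<forall>x\<in>\<Omega>. jac u x \<in> Lset a"
    proof (cases "\<Omega> = {}")
      case False
      then obtain x0 where x0: "x0 \<in> \<Omega>" by blast
      show ?thesis
      proof (intro exI conjI ballI)
        show "?F x0 \<ge> 0"
          unfolding fro_sq_def by (intro sum_nonneg) auto
        show "jac u x \<in> Lset (?F x0)" if "x \<in> \<Omega>" for x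
          unfolding Lset_def using const[OF that x0] det[OF that] by simp
      qed
    qed auto
  qed
qed

end
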